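(* Even for update sequences of width $3$: any deterministic strict dynamic embedding into HSTs incurs distortion $\Omega(2^n)$, and any probabilistic strict dynamic embedding into HSTs incurs distortion $\Omega(n)$, where $n$ is the number of points of the sequence. Furthermore, any deterministic online monotone embedding into HSTs incurs distortion $\Omega(n)$ on update sequences of width $3$.
   Context: For $\mu \ge 1$, a $\mu$-HST is a metric space whose points are the leaves of a rooted tree $T$; every node $v$ has weight $\varphi(v)\ge 0$, $\varphi(v)=0$ iff $v$ is a leaf, $\varphi(v)\le\varphi(u)/\mu$ when $v$ is a child of $u$; the distance of leaves $u,v$ is $\varphi(\mathrm{lca}(u,v))$. "HSTs" denotes the family of such metrics. An update sequence on a metric $(X,d_X)$ is a sequence of pairs $(v_t,o_t)\in X\times\{+,-\}$ ($v_t$ arrives if $o_t=+$, leaves if $o_t=-$) with alive sets $L_0=\varnothing$, $L_t=L_{t-1}\cup\{v_t\}$ or $L_{t-1}\setminus\{v_t\}$ accordingly; its width is $\max_t|L_t|$. A deterministic online monotone embedding into HSTs receives the sequence one element at a time and after $\sigma_t$ (depending only on $\sigma_1,\dots,\sigma_t$) outputs a metric $d_t$ on $L_t$ that is an HST, satisfies $d_t(u,v)\ge d_X(u,v)$ for $u,v\in L_t$, and $d_t(u,v)\le d_{t-1}(u,v)$ for $u,v\in L_{t-1}\cap L_t$. It is strict if moreover $d_t(u,v)=d_{t-1}(u,v)$ for all $u,v\in L_{t-1}\cap L_t$ (distances are fixed upon arrival). A probabilistic embedding is a distribution over deterministic ones (sequence chosen independently of the randomness). Distortion $\lambda$ means $d_t(u,v)\le\lambda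 d_X(u,v)$ (deterministic) resp. $\mathbb E[d_t(u,v)]\le\lambda d_X(u,v)$ (probabilistic) for all $t$ and $u,v\in L_t$. *)

theory Defs
  imports "HOL-Probability.Probability"
begin

definition metric_on :: "('a \<Rightarrow> 'a \<Rightarrow> real) \<Rightarrow> bool" where
  "metric_on d \<longleftrightarrow> (\<forall>x y z. (d x y = 0 \<longleftrightarrow> x = y) \<and> d x y = d y x \<and> d x z \<le> d x y + d y z)"

text \<open>A finite rooted tree: node set V (of naturals), root r, parent function p
  (with p r = r); every node reaches the root by iterating p.\<close>

definition anc :: "(nat \<Rightarrow> nat) \<Rightarrow> nat \<Rightarrow> nat set" where
  "anc p v = range (\<lambda>k. (p ^^ k) v)"

definition children :: "nat set \<Rightarrow> nat \<Rightarrow> (nat \<Rightarrow> nat) \<Rightarrow> nat \<Rightarrow> nat set" where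
  "children V r p u = {v \<in> V. v \<noteq> r \<and> p v = u}"

definition tree_leaves :: "nat set \<Rightarrow> nat \<Rightarrow> (nat \<Rightarrow> nat) \<Rightarrow> nat set" where
  "tree_leaves V r p = {v \<in> V. children V r p v = {}}"

definition rooted_tree :: "nat set \<Rightarrow> nat \<Rightarrow> (nat \<Rightarrow> nat) \<Rightarrow> bool" where
  "rooted_tree V r p \<longleftrightarrow> finite V \<and> r \<in> V \<and> p r = r \<and> (\<forall>v \<in> V - {r}. p v \<in> V)
     \<and> (\<forall>v \<in> V. r \<in> anc p v)"

definition lca :: "(nat \<Rightarrow> nat) \<Rightarrow> nat \<Rightarrow> nat \<Rightarrow> nat" where
  "lca p a b = (THE w. w \<in> anc p a \<inter> anc p b \<and> (\<forall>w' \<in> anc p a \<inter> anc p b. w' \<in> anc p w))"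

text \<open>d restricted to L is a mu-HST: L is identified (bijectively via f) with the
  leaves of a weighted rooted tree, and d is the weight of the lca.\<close>
definition is_muHST :: "real \<Rightarrow> 'a set \<Rightarrow> ('a \<Rightarrow> 'a \<Rightarrow> real) \<Rightarrow> bool" where
  "is_muHST \<mu> L d \<longleftrightarrow> (\<exists>V r p (\<phi>::nat \<Rightarrow> real) f.
      rooted_tree V r p
    \<and> (\<forall>v \<in> V. \<phi> v \<ge> 0)
    \<and> (\<forall>v \<in> V. \<phi> v = 0 \<longleftrightarrow> v \<in> tree_leaves V r p)
    \<and> (\<forall>v \<in> V - {r}. \<phi> v \<le> \<phi> (p v) / \<mu>)
    \<and> bij_betw f L (tree_leaves V r p)
    \<and> (\<forall>x \<in> L. \<forall>y \<in> L. d x y = \<phi> (lca p (f x) (f y))))"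

text \<open>The family "HSTs": mu-HSTs for some mu >= 1 (the empty metric space counts trivially).\<close>
definition is_HST :: "'a set \<Rightarrow> ('a \<Rightarrow> 'a \<Rightarrow> real) \<Rightarrow> bool" where
  "is_HST L d \<longleftrightarrow> L = {} \<or> (\<exists>\<mu> \<ge> 1. is_muHST \<mu> L d)"

text \<open>An update sequence is a list of pairs (v, o); o = True means arrival (+),
  o = False means departure (-).  alive (take t s) is the alive set L_t.\<close>

definition alive :: "('a \<times> bool) list \<Rightarrow> 'a set" where
  "alive s = foldl (\<lambda>L (v, op). if op then insert v L else L - {v}) {} s"

definition width :: "('a \<times> bool) list \<Rightarrow> nat" where
  "width s = Max ((\<lambda>t. card (alive (take t s))) ` {0..length s})"

definition points :: "('a \<times> bool) list \<Rightarrow> 'a set" where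
  "points s = fst ` set s"

text \<open>A deterministic online algorithm maps the prefix sigma_1..sigma_t to the metric d_t.\<close>
type_synonym 'a online_alg = "('a \<times> bool) list \<Rightarrow> 'a \<Rightarrow> 'a \<Rightarrow> real"

definition online_monotone_emb :: "('a \<Rightarrow> 'a \<Rightarrow> real) \<Rightarrow> 'a online_alg \<Rightarrow> bool" where
  "online_monotone_emb d A \<longleftrightarrow> (\<forall>s x.
     let L = alive (s @ [x]); L' = alive s in
       is_HST L (A (s @ [x]))
     \<and> (\<forall>u \<in> L. \<forall>v \<in> L. A (s @ [x]) u v \<ge> d u v)
     \<and> (\<forall>u \<in> L \<inter> L'. \<forall>v \<in> L \<inter> L'. A (s @ [x]) u v \<le> A s u v))"

definition strict_emb :: "('a \<Rightarrow> 'a \<Rightarrow> real) \<Rightarrow> 'a online_alg \<Rightarrow> bool" where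
  "strict_emb d A \<longleftrightarrow> online_monotone_emb d A \<and> (\<forall>s x.
     let L = alive (s @ [x]); L' = alive s in
       (\<forall>u \<in> L \<inter> L'. \<forall>v \<in> L \<inter> L'. A (s @ [x]) u v = A s u v))"

definition prob_strict_emb :: "('a \<Rightarrow> 'a \<Rightarrow> real) \<Rightarrow> 'a online_alg measure \<Rightarrow> bool" where
  "prob_strict_emb d M \<longleftrightarrow> prob_space M \<and> (\<forall>A \<in> space M. strict_emb d A)
     \<and> (\<forall>s u v. (\<lambda>A. A s u v) \<in> borel_measurable M)"

definition det_distortion ::
  "('a \<Rightarrow> 'a \<Rightarrow> real) \<Rightarrow> 'a online_alg \<Rightarrow> ('a \<times> bool) list \<Rightarrow> real \<Rightarrow> bool" where
  "det_distortion d A s lam \<longleftrightarrow> (\<forall>t \<le> length s. \<forall>u \<in> alive (take t s). \<forall>v \<in> alive (take t s).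
      A (take t s) u v \<le> lam * d u v)"

definition prob_distortion ::
  "('a \<Rightarrow> 'a \<Rightarrow> real) \<Rightarrow> 'a online_alg measure \<Rightarrow> ('a \<times> bool) list \<Rightarrow> real \<Rightarrow> bool" where
  "prob_distortion d M s lam \<longleftrightarrow> (\<forall>t \<le> length s. \<forall>u \<in> alive (take t s). \<forall>v \<in> alive (take t s).
      (\<integral>\<^sup>+ A. ennreal (A (take t s) u v) \<partial>M) \<le> ennreal (lam * d u v))"

end

theory Submission
  imports Defs
begin

text \<open>All three bounds are realised on the line metric on the naturals and rest on the
  ultrametric inequality of HSTs.

  Against a strict embedding, the adversary keeps two alive points at distance 2^j, inserts
  their midpoint and then deletes an endpoint.  Distances are frozen, so the ultrametric
  inequality at the arrival of the midpoint makes one of the two halves inherit the embedded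
  distance of the whole pair; the adversary keeps that half.  After m halvings two points at
  distance 1 are embedded at distance at least 2^m, using only m + 2 points.  Against a random
  strict embedding the adversary keeps the half of larger expected distance: as both halves
  are at least their true length and their maximum is the old distance, the expected
  distance per unit of true length grows by 1/2 with every halving.

  Against a monotone embedding, 0 stays alive while a second point walks to the right one unit
  at a time.  When the walker advances, the ultrametric inequality bounds its new distance to 0
  by the maximum of its old distance to 0, which can only have shrunk, and of a distance
  between neighbours, which is at most the distortion; so the distance to 0 never exceeds the
  distortion, although after n steps it is at least n + 1.\<close>

section \<open>Ultrametricity of HSTs\<close>

lemma anc_iff: "w \<in> anc p v \<longleftrightarrow> (\<exists>k. w = (p ^^ k) v)"
  unfolding anc_def by auto

lemma anc_trans: "w \<in> anc p v \<Longrightarrow> u \<in> anc p w \<Longrightarrow> u \<in> anc p v"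
  unfolding anc_iff by (metis comp_apply funpow_add)

lemma anc_linear:
  assumes "a \<in> anc p v" "b \<in> anc p v"
  shows "a \<in> anc p b \<or> b \<in> anc p a"
proof -
  obtain i j where "a = (p ^^ i) v" "b = (p ^^ j) v"
    using assms unfolding anc_iff by blast
  then have "b = (p ^^ (j - i)) a \<or> a = (p ^^ (i - j)) b"
    by (metis comp_apply funpow_add le_add_diff_inverse2 nat_le_linear)
  then show ?thesis
    unfolding anc_iff by blast
qed

lemma rooted_tree_funpow_in:
  assumes "rooted_tree V r p" "v \<in> V"
  shows "(p ^^ k) v \<in> V"
proof (induction k)
  case (Suc k)
  then show ?case
    using assms unfolding rooted_tree_def by (cases "(p ^^ k) v = r") auto
qed (use assms in simp)

lemma rooted_tree_anc_antisym:
  assumes "rooted_tree V r p" "v \<in> V" "w \<in> anc p v" "v \<in> anc p w"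
  shows "v = w"
proof -
  obtain i j where i: "w = (p ^^ i) v" and j: "v = (p ^^ j) w"
    using assms(3,4) unfolding anc_iff by blast
  have cycle: "(p ^^ (j + i)) v = v"
    using i j by (simp add: funpow_add)
  show ?thesis
  proof (cases "j + i = 0")
    case False
    \<comment> \<open>v lies on a cycle of p; the root is reached from v, so it lies on the cycle too, and being
      a fixed point of p it is the whole cycle\<close>
    have root_fixed: "(p ^^ k) r = r" for k
      using assms(1) unfolding rooted_tree_def by (induction k) auto
    obtain l where "r = (p ^^ l) v"
      using assms(1,2) unfolding rooted_tree_def anc_iff by blast
    then have r: "r = (p ^^ (l mod (j + i))) v"
      using cycle by (simp add: funpow_mod_eq)
    have "l mod (j + i) < j + i"
      using False by simp
    then have "(p ^^ (j + i)) v = (p ^^ (j + i - l mod (j + i))) ((p ^^ (l mod (j + i))) v)"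
      by (metis comp_apply funpow_add le_add_diff_inverse2 less_imp_le)
    then have "v = (p ^^ (j + i - l mod (j + i))) r"
      using cycle r by simp
    then have "v = r"
      using r root_fixed by simp
    then show ?thesis
      using i root_fixed by simp
  qed (use i in simp)
qed

lemma rooted_tree_lca:
  assumes "rooted_tree V r p" "a \<in> V" "b \<in> V"
  shows "lca p a b \<in> anc p a \<inter> anc p b"
    and "\<And>w. w \<in> anc p a \<inter> anc p b \<Longrightarrow> w \<in> anc p (lca p a b)"
proof -
  let ?is_lca = "\<lambda>w. w \<in> anc p a \<inter> anc p b \<and> (\<forall>w' \<in> anc p a \<inter> anc p b. w' \<in> anc p w)"
  obtain l where "(p ^^ l) a \<in> anc p b"
    using assms unfolding rooted_tree_def anc_iff by metis
  define k where "k = (LEAST k. (p ^^ k) a \<in> anc p b)"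
  have k: "(p ^^ k) a \<in> anc p b"
    unfolding k_def by (rule LeastI) fact
  have lowest: "?is_lca ((p ^^ k) a)"
  proof (intro conjI ballI)
    show "(p ^^ k) a \<in> anc p a \<inter> anc p b"
      using k anc_iff by blast
  next
    fix w assume w: "w \<in> anc p a \<inter> anc p b"
    then obtain j where j: "w = (p ^^ j) a"
      using anc_iff by blast
    have "k \<le> j"
      unfolding k_def using w j by (intro Least_le) simp
    then have "w = (p ^^ (j - k)) ((p ^^ k) a)"
      using j by (metis comp_apply funpow_add le_add_diff_inverse2)
    then show "w \<in> anc p ((p ^^ k) a)"
      unfolding anc_iff by blast
  qed
  have "w = (p ^^ k) a" if "?is_lca w" for w
    using that lowest rooted_tree_anc_antisym[OF assms(1) rooted_tree_funpow_in[OF assms(1,2)]]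
    by blast
  then have "\<exists>!w. ?is_lca w"
    using lowest by blast
  then have "?is_lca (lca p a b)"
    unfolding lca_def by (rule theI')
  then show "lca p a b \<in> anc p a \<inter> anc p b"
    and "\<And>w. w \<in> anc p a \<inter> anc p b \<Longrightarrow> w \<in> anc p (lca p a b)"
    by blast+
qed

lemma muHST_weight_anc_mono:
  fixes \<phi> :: "nat \<Rightarrow> real"
  assumes T: "rooted_tree V r p" and nonneg: "\<forall>v \<in> V. 0 \<le> \<phi> v"
    and decay: "\<forall>v \<in> V - {r}. \<phi> v \<le> \<phi> (p v) / \<mu>" and "1 \<le> \<mu>"
    and "v \<in> V" "w \<in> anc p v"
  shows "\<phi> v \<le> \<phi> w"
proof -
  have "\<phi> v \<le> \<phi> ((p ^^ k) v)" for k
  proof (induction k)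
    case (Suc k)
    let ?u = "(p ^^ k) v"
    have u: "?u \<in> V"
      using rooted_tree_funpow_in[OF T \<open>v \<in> V\<close>] .
    have "\<phi> ?u \<le> \<phi> (p ?u)"
    proof (cases "?u = r")
      case False
      then have "0 \<le> \<phi> (p ?u)"
        using u T nonneg unfolding rooted_tree_def by auto
      then have "\<phi> (p ?u) / \<mu> \<le> \<phi> (p ?u)"
        using \<open>1 \<le> \<mu>\<close> by (simp add: divide_le_eq mult_le_cancel_left1)
      then show ?thesis
        using decay u False by force
    qed (use T in \<open>simp add: rooted_tree_def\<close>)
    then show ?case
      using Suc by simp
  qed simp
  then show ?thesis
    using \<open>w \<in> anc p v\<close> unfolding anc_iff by blast
qed

lemma is_HST_ultrametric:
  assumes "is_HST L D" "x \<in> L" "y \<in> L" "z \<in> L"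
  shows "D x z \<le> max (D x y) (D y z)"
proof -
  obtain \<mu> where "1 \<le> \<mu>" "is_muHST \<mu> L D"
    using assms unfolding is_HST_def by blast
  then obtain V r p \<phi> f where T: "rooted_tree V r p" and nonneg: "\<forall>v \<in> V. 0 \<le> \<phi> v"
    and decay: "\<forall>v \<in> V - {r}. \<phi> v \<le> \<phi> (p v) / \<mu>" and f: "bij_betw f L (tree_leaves V r p)"
    and D: "\<forall>x \<in> L. \<forall>y \<in> L. D x y = \<phi> (lca p (f x) (f y))"
    unfolding is_muHST_def by blast
  have a: "f x \<in> V" and b: "f y \<in> V" and c: "f z \<in> V"
    using f assms(2-4) unfolding bij_betw_def tree_leaves_def by auto
  let ?ab = "lca p (f x) (f y)" and ?bc = "lca p (f y) (f z)" and ?ac = "lca p (f x) (f z)"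
  note lca_ab = rooted_tree_lca[OF T a b] and lca_bc = rooted_tree_lca[OF T b c]
    and lca_ac = rooted_tree_lca[OF T a c]
  have ac: "?ac \<in> V"
    using lca_ac(1) rooted_tree_funpow_in[OF T a] by (auto simp: anc_iff)
  \<comment> \<open>both lca's lie on the path from f y to the root, and the higher one is a common ancestor
    of f x and f z\<close>
  have "?ab \<in> anc p ?bc \<or> ?bc \<in> anc p ?ab"
    using lca_ab(1) lca_bc(1) anc_linear by blast
  then have "?ab \<in> anc p ?ac \<or> ?bc \<in> anc p ?ac"
    using lca_ab(1) lca_bc(1) by (metis IntD1 IntD2 IntI anc_trans lca_ac(2))
  then have "\<phi> ?ac \<le> \<phi> ?ab \<or> \<phi> ?ac \<le> \<phi> ?bc"
    using muHST_weight_anc_mono[OF T nonneg decay \<open>1 \<le> \<mu>\<close> ac] by blast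
  then show ?thesis
    using D assms(2-4) by auto
qed

section \<open>Online embeddings along update sequences\<close>

lemma alive_Nil [simp]: "alive [] = {}"
  unfolding alive_def by simp

lemma alive_snoc [simp]: "alive (s @ [(v, b)]) = (if b then insert v (alive s) else alive s - {v})"
  unfolding alive_def by simp

lemma alive_append_stays:
  assumes "u \<in> alive s" "(u, False) \<notin> set r"
  shows "u \<in> alive (s @ r)"
  using assms(2)
proof (induction r rule: rev_induct)
  case (snoc x r)
  then show ?case
    by (cases x) (auto simp flip: append_assoc)
qed (use assms(1) in simp)

lemma points_append: "points (s @ r) = points s \<union> fst ` set r"
  unfolding points_def by auto

lemma alive_subset_points: "alive s \<subseteq> points s"
proof (induction s rule: rev_induct)
  case (snoc x s)
  then show ?case
    by (cases x) (auto simp: points_append)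
qed simp

lemma width_Nil [simp]: "width [] = 0"
  unfolding width_def by simp

lemma width_snoc: "width (s @ [x]) = max (width s) (card (alive (s @ [x])))"
proof -
  let ?c = "\<lambda>s t. card (alive (take t s))"
  have "?c (s @ [x]) ` {0..length (s @ [x])} = insert (card (alive (s @ [x]))) (?c s ` {0..length s})"
    by (force simp: atLeast0_atMost_Suc)
  then show ?thesis
    unfolding width_def by (simp add: Max_insert max.commute)
qed

lemma width_two_arrivals: "u \<noteq> v \<Longrightarrow> width [(u, True), (v, True)] = 2"
  using width_snoc[of "[]" "(u, True)"] width_snoc[of "[(u, True)]" "(v, True)"]
  by (simp add: alive_def)

lemma det_distortion_prefixD:
  assumes "det_distortion d A (s @ r) lam" "u \<in> alive s" "v \<in> alive s"
  shows "A s u v \<le> lam * d u v"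
  using assms unfolding det_distortion_def by (metis append_eq_conv_conj le_add1 length_append)

definition expected_dist ::
    "'a online_alg measure \<Rightarrow> ('a \<times> bool) list \<Rightarrow> 'a \<Rightarrow> 'a \<Rightarrow> ennreal" where
  "expected_dist M s u v = (\<integral>\<^sup>+ A. ennreal (A s u v) \<partial>M)"

lemma prob_distortionD:
  assumes "prob_distortion d M s lam" "u \<in> alive s" "v \<in> alive s"
  shows "expected_dist M s u v \<le> ennreal (lam * d u v)"
  using assms unfolding prob_distortion_def expected_dist_def by force

lemma strict_emb_imp_online_monotone_emb: "strict_emb d A \<Longrightarrow> online_monotone_emb d A"
  unfolding strict_emb_def by blast

lemma online_monotone_emb_HST:
  assumes "online_monotone_emb d A"
  shows "is_HST (alive s) (A s)"
proof (cases s rule: rev_cases)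
  case Nil
  then show ?thesis
    unfolding is_HST_def by simp
next
  case (snoc s' x)
  then show ?thesis
    using assms unfolding online_monotone_emb_def Let_def by blast
qed

lemma online_monotone_emb_ultrametric:
  assumes "online_monotone_emb d A" "x \<in> alive s" "y \<in> alive s" "z \<in> alive s"
  shows "A s x z \<le> max (A s x y) (A s y z)"
  using is_HST_ultrametric[OF online_monotone_emb_HST[OF assms(1)]] assms(2-4) .

lemma online_monotone_emb_dominates:
  assumes "online_monotone_emb d A" "u \<in> alive s" "v \<in> alive s"
  shows "d u v \<le> A s u v"
proof (cases s rule: rev_cases)
  case (snoc s' x)
  then show ?thesis
    using assms unfolding online_monotone_emb_def Let_def by blast
qed (use assms in simp)

lemma online_monotone_emb_step:
  assumes "online_monotone_emb d A" "u \<in> alive s" "v \<in> alive s"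
    and "u \<in> alive (s @ [x])" "v \<in> alive (s @ [x])"
  shows "A (s @ [x]) u v \<le> A s u v"
  using assms unfolding online_monotone_emb_def Let_def by blast

lemma strict_emb_step:
  assumes "strict_emb d A" "u \<in> alive s" "v \<in> alive s"
    and "u \<in> alive (s @ [x])" "v \<in> alive (s @ [x])"
  shows "A (s @ [x]) u v = A s u v"
  using assms unfolding strict_emb_def Let_def by blast

lemma online_monotone_emb_antimono:
  assumes "online_monotone_emb d A" "u \<in> alive s" "v \<in> alive s"
    and "(u, False) \<notin> set r" "(v, False) \<notin> set r"
  shows "A (s @ r) u v \<le> A s u v"
  using assms(4,5)
proof (induction r rule: rev_induct)
  case (snoc x r)
  have "u \<in> alive (s @ r)" "v \<in> alive (s @ r)"
    using alive_append_stays assms(2,3) snoc.prems by auto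
  moreover have "u \<in> alive ((s @ r) @ [x])" "v \<in> alive ((s @ r) @ [x])"
    using alive_append_stays[OF assms(2) snoc.prems(1)] alive_append_stays[OF assms(3) snoc.prems(2)]
    by simp_all
  ultimately have "A ((s @ r) @ [x]) u v \<le> A (s @ r) u v"
    by (rule online_monotone_emb_step[OF assms(1)])
  then show ?case
    using snoc by simp
qed simp

lemma strict_emb_fixed:
  assumes "strict_emb d A" "u \<in> alive s" "v \<in> alive s"
    and "(u, False) \<notin> set r" "(v, False) \<notin> set r"
  shows "A (s @ r) u v = A s u v"
  using assms(4,5)
proof (induction r rule: rev_induct)
  case (snoc x r)
  have "u \<in> alive (s @ r)" "v \<in> alive (s @ r)"
    using alive_append_stays assms(2,3) snoc.prems by auto
  moreover have "u \<in> alive ((s @ r) @ [x])" "v \<in> alive ((s @ r) @ [x])"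
    using alive_append_stays[OF assms(2) snoc.prems(1)] alive_append_stays[OF assms(3) snoc.prems(2)]
    by simp_all
  ultimately have "A ((s @ r) @ [x]) u v = A (s @ r) u v"
    by (rule strict_emb_step[OF assms(1)])
  then show ?case
    using snoc by simp
qed simp

text \<open>Distances are frozen, so the ultrametric inequality at the arrival of c passes the distance
  of a and b on to one of the pairs that survive the departure of a or of b.\<close>
lemma strict_emb_bisect:
  assumes A: "strict_emb d A" and ab: "alive s = {a, b}" and "distinct [a, b, c]"
  shows "A s a b \<le> max (A (s @ [(c, True), (b, False)]) a c) (A (s @ [(c, True), (a, False)]) c b)"
proof -
  let ?s = "s @ [(c, True)]"
  have alive: "a \<in> alive ?s" "b \<in> alive ?s" "c \<in> alive ?s"
    using ab by auto
  have neq: "a \<noteq> b" "c \<noteq> b" "a \<noteq> c"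
    using \<open>distinct [a, b, c]\<close> by auto
  have "A s a b = A ?s a b"
    using strict_emb_fixed[OF A, of a s b "[(c, True)]"] ab by simp
  also have "\<dots> \<le> max (A ?s a c) (A ?s c b)"
    using online_monotone_emb_ultrametric[OF strict_emb_imp_online_monotone_emb[OF A] alive(1,3,2)] .
  also have "A ?s a c = A (?s @ [(b, False)]) a c"
    by (rule strict_emb_fixed[OF A alive(1,3), symmetric]) (use neq in simp_all)
  also have "A ?s c b = A (?s @ [(a, False)]) c b"
    by (rule strict_emb_fixed[OF A alive(3,2), symmetric]) (use neq in simp_all)
  finally show ?thesis
    by simp
qed

section \<open>The bisection adversary\<close>

lemma finite_points [simp]: "finite (points s)"
  unfolding points_def by simp

lemma arrive_depart:
  assumes ab: "alive s = {a, b}" "a \<noteq> b" and c: "c \<notin> points s" and "e \<in> {a, b}"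
    and "width s \<le> 3"
  shows "alive (s @ [(c, True), (e, False)]) = {a, b, c} - {e}"
    and "width (s @ [(c, True), (e, False)]) = 3"
    and "points (s @ [(c, True), (e, False)]) = insert c (points s)"
proof -
  have "c \<notin> {a, b}"
    using c alive_subset_points[of s] unfolding ab by (meson subsetD)
  then have arrived: "card (alive (s @ [(c, True)])) = 3"
    using ab by simp
  have "card ({a, b, c} - {e}) < card {a, b, c}"
    using \<open>e \<in> {a, b}\<close> by (intro card_Diff1_less) auto
  also have "card {a, b, c} = 3"
    using arrived ab by (simp add: insert_commute)
  finally have "card ({a, b, c} - {e}) < 3" .
  moreover show "alive (s @ [(c, True), (e, False)]) = {a, b, c} - {e}"
    using alive_snoc[of "s @ [(c, True)]" e False] ab by (simp add: insert_commute)
  ultimately show "width (s @ [(c, True), (e, False)]) = 3"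
    using arrived \<open>width s \<le> 3\<close> width_snoc[of s] width_snoc[of "s @ [(c, True)]"] by simp
  show "points (s @ [(c, True), (e, False)]) = insert c (points s)"
    using \<open>e \<in> {a, b}\<close> alive_subset_points[of s] unfolding ab by (auto simp: points_append)
qed

text \<open>The bookkeeping of the bisection adversary after m - j halvings.  No point used so far lies
  strictly between the alive points lo and lo + 2^j, so the next midpoint is a new point.\<close>
definition bisection_state :: "nat \<Rightarrow> nat \<Rightarrow> (nat \<times> bool) list \<Rightarrow> nat \<Rightarrow> bool" where
  "bisection_state m j s lo \<longleftrightarrow> alive s = {lo, lo + 2 ^ j} \<and> width s \<le> 3 \<and> (j < m \<longrightarrow> width s = 3)
    \<and> card (points s) + j = m + 2 \<and> points s \<inter> {lo<..<lo + 2 ^ j} = {}"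

lemma bisection_state_start: "bisection_state m m [(0, True), (2 ^ m, True)] 0"
proof -
  let ?s = "[(0 :: nat, True), (2 ^ m, True)]"
  have "alive ?s = {0, 2 ^ m}" "points ?s = {0, 2 ^ m}"
    by (auto simp: alive_def points_def)
  moreover have "width ?s = 2"
    by (rule width_two_arrivals) simp
  ultimately show ?thesis
    unfolding bisection_state_def by auto
qed

lemma bisection_state_halve:
  assumes "bisection_state m (Suc j) s lo"
  shows "bisection_state m j (s @ [(lo + 2 ^ j, True), (lo + 2 * 2 ^ j, False)]) lo"
    and "bisection_state m j (s @ [(lo + 2 ^ j, True), (lo, False)]) (lo + 2 ^ j)"
proof -
  define h :: nat where "h = 2 ^ j"
  have alive: "alive s = {lo, lo + 2 * h}" and width: "width s \<le> 3"
    and card: "card (points s) + Suc j = m + 2" and gap: "points s \<inter> {lo<..<lo + 2 * h} = {}"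
    using assms unfolding bisection_state_def h_def by auto
  have "0 < h"
    unfolding h_def by simp
  have fresh: "lo + h \<notin> points s"
    using gap \<open>0 < h\<close> by auto
  note move = arrive_depart[OF alive _ fresh _ width]
  have card': "card (insert (lo + h) (points s)) + j = m + 2"
    using card fresh by simp
  have "alive (s @ [(lo + h, True), (lo + 2 * h, False)]) = {lo, lo + 2 * h, lo + h} - {lo + 2 * h}"
    by (rule move(1)) (use \<open>0 < h\<close> in simp_all)
  also have "\<dots> = {lo, lo + h}"
    using \<open>0 < h\<close> by auto
  finally have "alive (s @ [(lo + h, True), (lo + 2 * h, False)]) = {lo, lo + h}" .
  moreover have "points (s @ [(lo + h, True), (lo + 2 * h, False)]) \<inter> {lo<..<lo + h} = {}"
    using move(3)[of "lo + 2 * h"] gap \<open>0 < h\<close> by auto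
  ultimately show "bisection_state m j (s @ [(lo + 2 ^ j, True), (lo + 2 * 2 ^ j, False)]) lo"
    using move(2,3)[of "lo + 2 * h"] \<open>0 < h\<close> card' unfolding bisection_state_def h_def by simp
  have "alive (s @ [(lo + h, True), (lo, False)]) = {lo, lo + 2 * h, lo + h} - {lo}"
    by (rule move(1)) (use \<open>0 < h\<close> in simp_all)
  also have "\<dots> = {lo + h, lo + h + h}"
    using \<open>0 < h\<close> by auto
  finally have "alive (s @ [(lo + h, True), (lo, False)]) = {lo + h, lo + h + h}" .
  moreover have "points (s @ [(lo + h, True), (lo, False)]) \<inter> {lo + h<..<lo + h + h} = {}"
    using move(3)[of lo] gap \<open>0 < h\<close> by auto
  ultimately show "bisection_state m j (s @ [(lo + 2 ^ j, True), (lo, False)]) (lo + 2 ^ j)"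
    using move(2,3)[of lo] \<open>0 < h\<close> card' unfolding bisection_state_def h_def by simp
qed

lemma bisection_adversary:
  fixes Q :: "nat \<Rightarrow> (nat \<times> bool) list \<Rightarrow> nat \<Rightarrow> bool"
  assumes "0 < m"
    and start: "Q m [(0, True), (2 ^ m, True)] 0"
    and halve: "\<And>j s lo. j < m \<Longrightarrow> Q (Suc j) s lo \<Longrightarrow> alive s = {lo, lo + 2 * 2 ^ j} \<Longrightarrow>
        Q j (s @ [(lo + 2 ^ j, True), (lo + 2 * 2 ^ j, False)]) lo \<or>
        Q j (s @ [(lo + 2 ^ j, True), (lo, False)]) (lo + 2 ^ j)"
  shows "\<exists>s lo. Q 0 s lo \<and> alive s = {lo, lo + 1} \<and> width s = 3 \<and> card (points s) = m + 2"
proof -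
  have "\<exists>s lo. Q j s lo \<and> bisection_state m j s lo" if "j \<le> m" for j
    using that
  proof (induction j rule: inc_induct)
    case base
    show ?case
      using start bisection_state_start by blast
  next
    case (step j)
    then obtain s lo where "Q (Suc j) s lo" "bisection_state m (Suc j) s lo"
      by blast
    moreover from this(2) have "alive s = {lo, lo + 2 * 2 ^ j}"
      unfolding bisection_state_def by simp
    ultimately show ?case
      using halve[OF step.hyps(2)] bisection_state_halve by blast
  qed
  then show ?thesis
    using \<open>0 < m\<close> unfolding bisection_state_def by fastforce
qed

section \<open>Lower bounds on the line\<close>

definition nat_dist :: "nat \<Rightarrow> nat \<Rightarrow> real" where
  "nat_dist u v = \<bar>real u - real v\<bar>"

lemma metric_on_nat_dist: "metric_on nat_dist"
  unfolding metric_on_def nat_dist_def by auto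

lemma nat_dist_shift [simp]: "nat_dist a (a + h) = real h" "nat_dist (a + h) a = real h"
  unfolding nat_dist_def by auto

lemma metric_on_nonneg:
  assumes "metric_on d"
  shows "0 \<le> d u v"
proof -
  have "d u u \<le> d u v + d v u" "d u u = 0" "d v u = d u v"
    using assms unfolding metric_on_def by blast+
  then show ?thesis
    by linarith
qed

lemma ennreal_add_ge_doubleD:
  fixes a b :: ennreal
  assumes "ennreal (2 * x) \<le> a + b"
  shows "ennreal x \<le> a \<or> ennreal x \<le> b"
proof (rule ccontr)
  assume "\<not> ?thesis"
  then have "a + b < ennreal x + ennreal x"
    by (simp add: add_strict_mono not_le)
  moreover have "ennreal x + ennreal x \<le> ennreal (2 * x)"
  proof (cases "0 \<le> x")
    case True
    then show ?thesis
      using ennreal_plus[of x x] by simp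
  qed (simp add: ennreal_neg)
  ultimately show False
    using assms by simp
qed

lemma prob_strict_emb_expected_dominates:
  assumes "prob_strict_emb d M" "u \<in> alive s" "v \<in> alive s"
  shows "ennreal (d u v) \<le> expected_dist M s u v"
proof -
  have "prob_space M" and strict: "\<And>A. A \<in> space M \<Longrightarrow> strict_emb d A"
    using assms(1) unfolding prob_strict_emb_def by auto
  have "ennreal (d u v) \<le> ennreal (A s u v)" if "A \<in> space M" for A
    using online_monotone_emb_dominates[OF strict_emb_imp_online_monotone_emb[OF strict[OF that]]]
      assms(2,3)
    by (intro ennreal_leI)
  then have "(\<integral>\<^sup>+ A. ennreal (d u v) \<partial>M) \<le> expected_dist M s u v"
    unfolding expected_dist_def by (rule nn_integral_mono)
  then show ?thesis
    using \<open>prob_space M\<close> by (simp add: prob_space.emeasure_space_1)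
qed

lemma prob_strict_emb_bisect:
  assumes M: "prob_strict_emb d M" and d: "metric_on d"
    and ab: "alive s = {a, b}" and "distinct [a, b, c]"
  shows "expected_dist M s a b + ennreal (min (d a c) (d c b))
    \<le> expected_dist M (s @ [(c, True), (b, False)]) a c
      + expected_dist M (s @ [(c, True), (a, False)]) c b"
proof -
  let ?l = "s @ [(c, True), (b, False)]" and ?r = "s @ [(c, True), (a, False)]"
  have "prob_space M" and strict: "\<And>A. A \<in> space M \<Longrightarrow> strict_emb d A"
    and "\<And>s u v. (\<lambda>A. A s u v) \<in> borel_measurable M"
    using M unfolding prob_strict_emb_def by auto
  then have meas: "(\<lambda>A. ennreal (A s u v)) \<in> borel_measurable M" for s u v
    by measurable
  have pointwise: "ennreal (A s a b) + ennreal (min (d a c) (d c b))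
      \<le> ennreal (A ?l a c) + ennreal (A ?r c b)"
    if "A \<in> space M" for A
  proof -
    note mono = strict_emb_imp_online_monotone_emb[OF strict[OF that]]
    have "a \<noteq> b" "c \<noteq> b" "c \<noteq> a"
      using \<open>distinct [a, b, c]\<close> by auto
    then have alive: "a \<in> alive ?l" "c \<in> alive ?l" "c \<in> alive ?r" "b \<in> alive ?r"
      using alive_snoc[of "s @ [(c, True)]" b False] alive_snoc[of "s @ [(c, True)]" a False] ab
      by simp_all
    have dominated: "d a c \<le> A ?l a c" "d c b \<le> A ?r c b" "d a b \<le> A s a b"
      using online_monotone_emb_dominates[OF mono] alive ab by auto
    have "A s a b \<le> max (A ?l a c) (A ?r c b)"
      using strict_emb_bisect[OF strict[OF that] ab \<open>distinct [a, b, c]\<close>] .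
    then have "A s a b + min (d a c) (d c b) \<le> A ?l a c + A ?r c b"
      using dominated by (auto simp: max_def min_def split: if_split_asm)
    then have "ennreal (A s a b + min (d a c) (d c b)) \<le> ennreal (A ?l a c + A ?r c b)"
      by (rule ennreal_leI)
    moreover have "0 \<le> d a c" "0 \<le> d c b" "0 \<le> d a b"
      using metric_on_nonneg[OF d] by auto
    ultimately show ?thesis
      using dominated by simp
  qed
  have "expected_dist M s a b + ennreal (min (d a c) (d c b))
      = (\<integral>\<^sup>+ A. ennreal (A s a b) + ennreal (min (d a c) (d c b)) \<partial>M)"
    unfolding expected_dist_def using \<open>prob_space M\<close>
    by (simp add: nn_integral_add meas prob_space.emeasure_space_1)
  also have "\<dots> \<le> (\<integral>\<^sup>+ A. ennreal (A ?l a c) + ennreal (A ?r c b) \<partial>M)"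
    by (intro nn_integral_mono pointwise)
  also have "\<dots> = expected_dist M ?l a c + expected_dist M ?r c b"
    unfolding expected_dist_def by (simp add: nn_integral_add meas)
  finally show ?thesis .
qed

lemma strict_emb_exponential_distortion:
  assumes A: "strict_emb nat_dist A" and "0 < m"
  shows "\<exists>\<sigma>. width \<sigma> = 3 \<and> card (points \<sigma>) = m + 2 \<and>
    (\<forall>lam. det_distortion nat_dist A \<sigma> lam \<longrightarrow> 2 ^ m \<le> lam)"
proof -
  let ?Q = "\<lambda>j s lo. (2 :: real) ^ m \<le> A s lo (lo + 2 ^ j)"
  have "nat_dist 0 (2 ^ m) \<le> A [(0, True), (2 ^ m, True)] 0 (2 ^ m)"
    by (rule online_monotone_emb_dominates[OF strict_emb_imp_online_monotone_emb[OF A]])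
      (auto simp: alive_def)
  then have start: "?Q m [(0, True), (2 ^ m, True)] 0"
    using nat_dist_shift(1)[of 0 "2 ^ m"] by simp
  have halve: "?Q j (s @ [(lo + 2 ^ j, True), (lo + 2 * 2 ^ j, False)]) lo \<or>
      ?Q j (s @ [(lo + 2 ^ j, True), (lo, False)]) (lo + 2 ^ j)"
    if "?Q (Suc j) s lo" "alive s = {lo, lo + 2 * 2 ^ j}" for j s lo
  proof -
    have midpoint: "lo + 2 ^ j + 2 ^ j = lo + 2 * 2 ^ j"
      by simp
    show ?thesis
      unfolding midpoint using strict_emb_bisect[OF A that(2), of "lo + 2 ^ j"] that(1)
      by (auto simp: le_max_iff_disj)
  qed
  obtain s lo where Q: "?Q 0 s lo" and alive: "alive s = {lo, lo + 1}"
    and "width s = 3" "card (points s) = m + 2"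
    using bisection_adversary[of m ?Q, OF \<open>0 < m\<close> start halve] by blast
  moreover have "2 ^ m \<le> lam" if "det_distortion nat_dist A s lam" for lam
    using det_distortion_prefixD[of nat_dist A s "[]" lam lo "lo + 1"] that alive Q
    by (simp add: nat_dist_def)
  ultimately show ?thesis
    by blast
qed

lemma prob_strict_emb_linear_distortion:
  assumes M: "prob_strict_emb nat_dist M" and "0 < m"
  shows "\<exists>\<sigma>. width \<sigma> = 3 \<and> card (points \<sigma>) = m + 2 \<and>
    (\<forall>lam. prob_distortion nat_dist M \<sigma> lam \<longrightarrow> 1 + real m / 2 \<le> lam)"
proof -
  \<comment> \<open>every halving raises the ratio of expected to true distance by 1/2\<close>
  let ?Q = "\<lambda>j s lo. ennreal ((1 + (real m - real j) / 2) * 2 ^ j) \<le> expected_dist M s lo (lo + 2 ^ j)"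
  have "ennreal (nat_dist 0 (2 ^ m)) \<le> expected_dist M [(0, True), (2 ^ m, True)] 0 (2 ^ m)"
    by (rule prob_strict_emb_expected_dominates[OF M]) (auto simp: alive_def)
  then have start: "?Q m [(0, True), (2 ^ m, True)] 0"
    using nat_dist_shift(1)[of 0 "2 ^ m"] by simp
  have halve: "?Q j (s @ [(lo + 2 ^ j, True), (lo + 2 * 2 ^ j, False)]) lo \<or>
      ?Q j (s @ [(lo + 2 ^ j, True), (lo, False)]) (lo + 2 ^ j)"
    if "j < m" "?Q (Suc j) s lo" "alive s = {lo, lo + 2 * 2 ^ j}" for j s lo
  proof -
    have midpoint: "lo + 2 ^ j + 2 ^ j = lo + 2 * 2 ^ j"
      by simp
    have "min (nat_dist lo (lo + 2 ^ j)) (nat_dist (lo + 2 ^ j) (lo + 2 * 2 ^ j)) = 2 ^ j"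
      unfolding midpoint[symmetric] nat_dist_shift by simp
    then have sum: "expected_dist M s lo (lo + 2 * 2 ^ j) + ennreal (2 ^ j)
      \<le> expected_dist M (s @ [(lo + 2 ^ j, True), (lo + 2 * 2 ^ j, False)]) lo (lo + 2 ^ j)
        + expected_dist M (s @ [(lo + 2 ^ j, True), (lo, False)]) (lo + 2 ^ j) (lo + 2 * 2 ^ j)"
      using prob_strict_emb_bisect[OF M metric_on_nat_dist that(3), of "lo + 2 ^ j"] by simp
    have "2 * ((1 + (real m - real j) / 2) * 2 ^ j)
        = (1 + (real m - real (Suc j)) / 2) * 2 ^ Suc j + 2 ^ j"
      by (simp add: field_simps)
    moreover have "0 \<le> (1 + (real m - real (Suc j)) / 2) * 2 ^ Suc j"
      using \<open>j < m\<close> by simp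
    ultimately have "ennreal (2 * ((1 + (real m - real j) / 2) * 2 ^ j))
      = ennreal ((1 + (real m - real (Suc j)) / 2) * 2 ^ Suc j) + ennreal (2 ^ j)"
      by simp
    also have "\<dots> \<le> expected_dist M s lo (lo + 2 * 2 ^ j) + ennreal (2 ^ j)"
      using that(2) by (simp add: add_right_mono)
    finally show ?thesis
      using ennreal_add_ge_doubleD sum unfolding midpoint by (meson order_trans)
  qed
  obtain s lo where Q: "?Q 0 s lo" and alive: "alive s = {lo, lo + 1}"
    and "width s = 3" "card (points s) = m + 2"
    using bisection_adversary[of m ?Q, OF \<open>0 < m\<close> start halve] by blast
  moreover have "1 + real m / 2 \<le> lam" if "prob_distortion nat_dist M s lam" for lam
  proof -
    have "ennreal (1 + real m / 2) \<le> ennreal lam"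
      using Q prob_distortionD[OF that, of lo "lo + 1"] alive by (simp add: nat_dist_def)
    then show ?thesis
      unfolding ennreal_le_iff2 by (auto simp: add_pos_nonneg)
  qed
  ultimately show ?thesis
    by blast
qed

fun walking_pair :: "nat \<Rightarrow> (nat \<times> bool) list" where
  "walking_pair 0 = [(0, True), (1, True)]"
| "walking_pair (Suc k) = walking_pair k @ [(k + 2, True), (k + 1, False)]"

lemma walking_pair_state:
  "alive (walking_pair k) = {0, k + 1} \<and> points (walking_pair k) = {0..k + 1}
    \<and> width (walking_pair k) = (if k = 0 then 2 else 3)"
proof (induction k)
  case 0
  then show ?case
    using width_two_arrivals[of "0 :: nat" 1] by (auto simp: alive_def points_def)
next
  case (Suc k)
  then have alive: "alive (walking_pair k) = {0, k + 1}" and points: "points (walking_pair k) = {0..k + 1}"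
    and width: "width (walking_pair k) \<le> 3"
    by simp_all
  note move = arrive_depart[OF alive _ _ _ width, of "k + 2" "k + 1"]
  have "{0, k + 1, k + 2} - {k + 1} = {0, Suc k + 1}"
    by auto
  moreover have "insert (k + 2) {0..k + 1} = {0..Suc k + 1}"
    by auto
  ultimately show ?case
    using move points by simp
qed

lemma walking_pair_prefix: "k \<le> n \<Longrightarrow> \<exists>r. walking_pair n = walking_pair k @ r"
proof (induction n rule: dec_induct)
  case (step n)
  then show ?case
    by (metis append.assoc walking_pair.simps(2))
qed simp

lemma online_monotone_emb_linear_distortion:
  assumes A: "online_monotone_emb nat_dist A" and "0 < n"
  shows "\<exists>\<sigma>. width \<sigma> = 3 \<and> card (points \<sigma>) = n + 2 \<and>
    (\<forall>lam. det_distortion nat_dist A \<sigma> lam \<longrightarrow> real n + 1 \<le> lam)"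
proof -
  have "real n + 1 \<le> lam" if dist: "det_distortion nat_dist A (walking_pair n) lam" for lam
  proof -
    have bounded: "A (walking_pair k) 0 (k + 1) \<le> lam" if "k \<le> n" for k
      using that
    proof (induction k)
      case 0
      then show ?case
        using walking_pair_prefix[of 0 n] det_distortion_prefixD[OF _, of nat_dist A _ _ lam 0 1] dist
        by (auto simp: alive_def nat_dist_def)
    next
      case (Suc k)
      let ?s = "walking_pair k @ [(k + 2, True)]"
      have alive: "alive (walking_pair k) = {0, k + 1}" "alive ?s = {0, k + 1, k + 2}"
        using walking_pair_state[of k] by auto
      obtain r where "walking_pair n = ?s @ [(k + 1, False)] @ r"
        using walking_pair_prefix[OF Suc.prems] by auto
      then have "det_distortion nat_dist A (?s @ [(k + 1, False)] @ r) lam"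
        using dist by simp
      then have "A ?s (k + 1) (k + 2) \<le> lam * nat_dist (k + 1) (k + 2)"
        by (rule det_distortion_prefixD) (use alive(2) in auto)
      then have "A ?s (k + 1) (k + 2) \<le> lam"
        by (simp add: nat_dist_def)
      moreover have "A ?s 0 (k + 1) \<le> A (walking_pair k) 0 (k + 1)"
        using online_monotone_emb_antimono[OF A, of 0 "walking_pair k" "k + 1" "[(k + 2, True)]"] alive(1)
        by simp
      moreover have "A ?s 0 (k + 2) \<le> max (A ?s 0 (k + 1)) (A ?s (k + 1) (k + 2))"
        using online_monotone_emb_ultrametric[OF A] alive(2) by simp
      moreover have "A (?s @ [(k + 1, False)]) 0 (k + 2) \<le> A ?s 0 (k + 2)"
        using online_monotone_emb_antimono[OF A, of 0 ?s "k + 2" "[(k + 1, False)]"] alive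
        by simp
      ultimately show ?case
        using Suc by simp
    qed
    have "nat_dist 0 (n + 1) \<le> A (walking_pair n) 0 (n + 1)"
      using online_monotone_emb_dominates[OF A] walking_pair_state[of n] by simp
    then show ?thesis
      using bounded[of n] by (simp add: nat_dist_def)
  qed
  moreover have "width (walking_pair n) = 3" "card (points (walking_pair n)) = n + 2"
    using walking_pair_state[of n] \<open>0 < n\<close> by simp_all
  ultimately show ?thesis
    by blast
qed

lemma distortion_bound_for_large_n:
  fixes d :: "nat \<Rightarrow> nat \<Rightarrow> real" and f g :: "nat \<Rightarrow> real"
    and Emb :: "(nat \<Rightarrow> nat \<Rightarrow> real) \<Rightarrow> 'e \<Rightarrow> bool"
    and Dist :: "(nat \<Rightarrow> nat \<Rightarrow> real) \<Rightarrow> 'e \<Rightarrow> (nat \<times> bool) list \<Rightarrow> real \<Rightarrow> bool"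
  assumes "metric_on d"
    and lower: "\<And>E m. Emb d E \<Longrightarrow> 0 < m \<Longrightarrow> \<exists>\<sigma>. width \<sigma> = 3 \<and> card (points \<sigma>) = m + 2 \<and>
      (\<forall>lam. Dist d E \<sigma> lam \<longrightarrow> g m \<le> lam)"
    and "0 < c" and scale: "\<And>m. c * f (m + 2) \<le> g m"
  shows "\<exists>c > 0. \<exists>n0. \<forall>n \<ge> n0. \<exists>d. metric_on d \<and> (\<forall>E. Emb d E \<longrightarrow>
    (\<exists>\<sigma>. width \<sigma> = 3 \<and> card (points \<sigma>) = n \<and> (\<forall>lam. Dist d E \<sigma> lam \<longrightarrow> lam \<ge> c * f n)))"
proof (intro exI[of _ c] conjI exI[of _ 3] allI impI exI[of _ d])
  fix n :: nat and E
  assume "3 \<le> n" "Emb d E"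
  obtain m where "n = m + 2" "0 < m"
    using \<open>3 \<le> n\<close> by (intro that[of "n - 2"]) auto
  then show "\<exists>\<sigma>. width \<sigma> = 3 \<and> card (points \<sigma>) = n \<and> (\<forall>lam. Dist d E \<sigma> lam \<longrightarrow> c * f n \<le> lam)"
    using lower[OF \<open>Emb d E\<close> \<open>0 < m\<close>] scale[of m] by force
qed (use assms in auto)

theorem mainTheorem3:
  shows "(\<exists>c > 0. \<exists>n0. \<forall>n \<ge> n0. \<exists>d :: nat \<Rightarrow> nat \<Rightarrow> real. metric_on d \<and>
            (\<forall>A. strict_emb d A \<longrightarrow>
               (\<exists>\<sigma>. width \<sigma> = 3 \<and> card (points \<sigma>) = n \<and>
                   (\<forall>lam. det_distortion d A \<sigma> lam \<longrightarrow> lam \<ge> c * 2 ^ n))))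
       \<and> (\<exists>c > 0. \<exists>n0. \<forall>n \<ge> n0. \<exists>d :: nat \<Rightarrow> nat \<Rightarrow> real. metric_on d \<and>
            (\<forall>M. prob_strict_emb d M \<longrightarrow>
               (\<exists>\<sigma>. width \<sigma> = 3 \<and> card (points \<sigma>) = n \<and>
                   (\<forall>lam. prob_distortion d M \<sigma> lam \<longrightarrow> lam \<ge> c * real n))))
       \<and> (\<exists>c > 0. \<exists>n0. \<forall>n \<ge> n0. \<exists>d :: nat \<Rightarrow> nat \<Rightarrow> real. metric_on d \<and>
            (\<forall>A. online_monotone_emb d A \<longrightarrow>
               (\<exists>\<sigma>. width \<sigma> = 3 \<and> card (points \<sigma>) = n \<and>
                   (\<forall>lam. det_distortion d A \<sigma> lam \<longrightarrow> lam \<ge> c * real n))))"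
  by (intro conjI
      distortion_bound_for_large_n[where Emb = strict_emb and Dist = det_distortion and c = "1 / 4",
        OF metric_on_nat_dist strict_emb_exponential_distortion]
      distortion_bound_for_large_n[where Emb = prob_strict_emb and Dist = prob_distortion and c = "1 / 2",
        OF metric_on_nat_dist prob_strict_emb_linear_distortion]
      distortion_bound_for_large_n[where Emb = online_monotone_emb and Dist = det_distortion and c = "1 / 2",
        OF metric_on_nat_dist online_monotone_emb_linear_distortion])
    (simp_all add: field_simps)

end
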